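(* Let $N_c\ge 1$. Let $\mathcal{D}_{xx}\in\mathbb{R}^{N_c\times N_c}$ be a block diagonal matrix whose diagonal blocks are $\mathcal{D}^{(n_k)}(a_k,b_k)$, $k=1,\dots,S$ (with $\sum_k n_k=N_c$), and let $\mathcal{D}_{yy}\in\mathbb{R}^{N_c\times N_c}$ be a block diagonal matrix whose diagonal blocks are $\mathcal{D}^{(m_l)}(c_l,d_l)$, $l=1,\dots,T$ (with $\sum_l m_l=N_c$). Let $P\in\mathbb{R}^{N_c\times N_c}$ be a permutation matrix. Assume that every block, in both $\mathcal{D}_{xx}$ and $\mathcal{D}_{yy}$, with parameters $(n,a,b)$ satisfies one of: (1) $n=1$ and $a>0$; (2) $n=2$, $a>0$ and $ab>1$; (3) $n\ge 3$, $a>\frac{n-2}{n-1}$, $b>\frac{n-2}{n-1}$ and $a>\frac{(n-2)b-(n-3)}{(n-1)b-(n-2)}$. Then the matrix $-\mathcal{L}:=\mathcal{D}_{xx}+P^T\mathcal{D}_{yy}P$ is symmetric positive definite.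
   Context: $\mathcal{D}^{(n)}(a,b)\in\mathbb{R}^{n\times n}$ is defined by: $\mathcal{D}^{(1)}(a,b)=(a)$; $\mathcal{D}^{(2)}(a,b)=\begin{pmatrix} a & -1\\ -1 & b\end{pmatrix}$; and for $n\ge 3$, the tridiagonal matrix with all sub- and super-diagonal entries equal to $-1$, diagonal entries $(a,2,\dots,2,b)$ (first entry $a$, last entry $b$, others $2$), and all other entries zero. In the application, $N_c$ is the number of computational grid points of a 2D embedded boundary discretization, $\mathcal{D}_{xx}$ is the (scaled) discretization of $-\partial_{xx}$ along all horizontal grid-line segments in lexicographic (fast-in-$x$) ordering, $\mathcal{D}_{yy}$ is the discretization of $-\partial_{yy}$ along all vertical segments in fast-in-$y$ ordering, and $P$ is the permutation converting the fast-in-$x$ ordering to the fast-in-$y$ ordering, so that $\mathcal{L}$ is the discrete Laplacian. *)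

theory Defs
  imports "Jordan_Normal_Form.Matrix" "HOL-Combinatorics.Permutations"
begin

definition Dmat :: "nat \<Rightarrow> real \<Rightarrow> real \<Rightarrow> real mat" where
  "Dmat n a b = mat n n (\<lambda>(i,j).
     if i = j then (if i = 0 then a else if i = n - 1 then b else 2)
     else if i = j + 1 \<or> j = i + 1 then -1 else 0)"

fun block_diag :: "real mat list \<Rightarrow> real mat" where
  "block_diag [] = 0\<^sub>m 0 0"
| "block_diag (B # Bs) =
     four_block_mat B (0\<^sub>m (dim_row B) (dim_col (block_diag Bs)))
                      (0\<^sub>m (dim_row (block_diag Bs)) (dim_col B)) (block_diag Bs)"

definition Dblocks :: "(nat \<times> real \<times> real) list \<Rightarrow> real mat" where
  "Dblocks ps = block_diag (map (\<lambda>(n,a,b). Dmat n a b) ps)"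

definition block_ok :: "nat \<times> real \<times> real \<Rightarrow> bool" where
  "block_ok p = (case p of (n,a,b) \<Rightarrow>
      (n = 1 \<and> a > 0)
    \<or> (n = 2 \<and> a > 0 \<and> a * b > 1)
    \<or> (n \<ge> 3 \<and> a > (real n - 2) / (real n - 1) \<and> b > (real n - 2) / (real n - 1)
        \<and> a > ((real n - 2) * b - (real n - 3)) / ((real n - 1) * b - (real n - 2))))"

definition perm_mat :: "nat \<Rightarrow> real mat \<Rightarrow> bool" where
  "perm_mat N P = (P \<in> carrier_mat N N \<and>
     (\<exists>p. p permutes {..<N} \<and> (\<forall>i<N. \<forall>j<N. P $$ (i,j) = (if p i = j then 1 else 0))))"

definition spd :: "nat \<Rightarrow> real mat \<Rightarrow> bool" where
  "spd N A = (A \<in> carrier_mat N N \<and> transpose_mat A = A \<and>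
     (\<forall>v \<in> carrier_vec N. v \<noteq> 0\<^sub>v N \<longrightarrow> v \<bullet> (A *\<^sub>v v) > 0))"

end

theory Submission
  imports Defs "HOL-Analysis.Convex"
begin

text \<open>For n \<ge> 2 and m = n - 1, the quadratic form of D^(n)(a,b) at f is
  sum_{i<m} (f_i - f_{i+1})^2 + (a - 1) f_0^2 + (b - 1) f_m^2.
  By Cauchy--Schwarz the sum of squared differences is at least (f_0 - f_m)^2 / m, so the form
  dominates the binary quadratic form (a - 1 + 1/m) x^2 - (2/m) x y + (b - 1 + 1/m) y^2 in
  (x, y) = (f_0, f_m), and conditions (2) and (3) say precisely that this binary form is positive
  definite. If f_0 = f_m = 0 but f \<noteq> 0, the sum of squared differences alone is positive.
  Positive definiteness then passes to block diagonal matrices, to congruences P^T B P with P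
  invertible, and to sums.\<close>

lemma binary_quadratic_form_pos:
  fixes \<alpha> \<beta> \<gamma> x y :: real
  assumes "0 < \<alpha>" and "\<gamma>\<^sup>2 < \<alpha> * \<beta>" and "x \<noteq> 0 \<or> y \<noteq> 0"
  shows "0 < \<alpha> * x\<^sup>2 - 2 * \<gamma> * x * y + \<beta> * y\<^sup>2"
proof -
  have "\<alpha> * (\<alpha> * x\<^sup>2 - 2 * \<gamma> * x * y + \<beta> * y\<^sup>2) = (\<alpha> * x - \<gamma> * y)\<^sup>2 + (\<alpha> * \<beta> - \<gamma>\<^sup>2) * y\<^sup>2"
    by (simp add: power2_eq_square algebra_simps)
  also have "\<dots> > 0"
  proof (cases "y = 0")
    case True
    then show ?thesis using assms by simp
  next
    case False
    then have "(\<alpha> * \<beta> - \<gamma>\<^sup>2) * y\<^sup>2 > 0" using assms(2) by simp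
    then show ?thesis by (simp add: add_nonneg_pos)
  qed
  finally show ?thesis using assms(1) by (simp add: zero_less_mult_iff)
qed

lemma squared_telescope_le:
  fixes f :: "nat \<Rightarrow> real"
  shows "(f 0 - f m)\<^sup>2 \<le> real m * (\<Sum>i<m. (f i - f (Suc i))\<^sup>2)"
  using sum_squared_le_sum_of_squares[of "\<lambda>i. f i - f (Suc i)" "{..<m}"]
  by (simp add: sum_lessThan_telescope' mult.commute)

lemma sum_squared_diffs_pos:
  fixes f :: "nat \<Rightarrow> real"
  assumes "f 0 = 0" and "i \<le> m" and "f i \<noteq> 0"
  shows "0 < (\<Sum>k<m. (f k - f (Suc k))\<^sup>2)"
  using assms(2,3)
proof (induction m arbitrary: i)
  case 0
  then show ?case using assms(1) by simp
next
  case (Suc m)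
  have "0 \<le> (\<Sum>k<m. (f k - f (Suc k))\<^sup>2)" by (simp add: sum_nonneg)
  moreover have "0 < (\<Sum>k<m. (f k - f (Suc k))\<^sup>2) \<or> 0 < (f m - f (Suc m))\<^sup>2"
  proof (cases "i \<le> m")
    case True
    then show ?thesis using Suc by blast
  next
    case False
    then have "f (Suc m) \<noteq> 0" using Suc.prems le_Suc_eq by auto
    then show ?thesis using Suc.IH[of m] by fastforce
  qed
  ultimately show ?case by (auto intro: add_nonneg_pos add_pos_nonneg)
qed

text \<open>Each square \<open>(f i - f (i + 1))\<^sup>2\<close> is shared out between the indices \<open>i\<close> and
  \<open>i + 1\<close>, so that the summand at \<open>i\<close> matches row \<open>i\<close> of \<open>Dmat\<close> up to the diagonal.\<close>

lemma sum_squared_diffs_split: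
  fixes f :: "nat \<Rightarrow> real"
  shows "(\<Sum>i<m. (f i - f (Suc i))\<^sup>2) =
    (\<Sum>i<Suc m. (if i < m then (f i)\<^sup>2 - f i * f (Suc i) else 0)
              + (if 0 < i then (f i)\<^sup>2 - f i * f (i - 1) else 0))"
proof -
  have "(\<Sum>i<m. (f i - f (Suc i))\<^sup>2) =
      (\<Sum>i<m. (f i)\<^sup>2 - f i * f (Suc i)) + (\<Sum>i<m. (f (Suc i))\<^sup>2 - f (Suc i) * f i)"
    by (simp add: power2_eq_square algebra_simps flip: sum.distrib)
  also have "(\<Sum>i<m. (f i)\<^sup>2 - f i * f (Suc i)) =
      (\<Sum>i<Suc m. if i < m then (f i)\<^sup>2 - f i * f (Suc i) else 0)"
    by simp
  also have "(\<Sum>i<m. (f (Suc i))\<^sup>2 - f (Suc i) * f i) =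
      (\<Sum>i<Suc m. if 0 < i then (f i)\<^sup>2 - f i * f (i - 1) else 0)"
    by (subst sum.lessThan_Suc_shift) simp
  finally show ?thesis by (simp add: sum.distrib)
qed

lemma energy_with_boundary_terms_pos:
  fixes m S a b x y :: real
  assumes "0 < m" and "(x - y)\<^sup>2 \<le> m * S"
    and "0 < a - 1 + 1/m" and "(1/m)\<^sup>2 < (a - 1 + 1/m) * (b - 1 + 1/m)"
    and "x \<noteq> 0 \<or> y \<noteq> 0"
  shows "0 < S + (a - 1) * x\<^sup>2 + (b - 1) * y\<^sup>2"
proof -
  have "(x - y)\<^sup>2 / m + (a - 1) * x\<^sup>2 + (b - 1) * y\<^sup>2
      = (a - 1 + 1/m) * x\<^sup>2 - 2 * (1/m) * x * y + (b - 1 + 1/m) * y\<^sup>2"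
    using assms(1) by (simp add: power2_eq_square field_simps)
  also have "\<dots> > 0"
    using assms(3-5) by (rule binary_quadratic_form_pos)
  finally show ?thesis
    using assms(1,2) by (smt (verit) pos_divide_le_eq mult.commute)
qed

lemma block_ok_end_coefficients:
  fixes n :: nat and a b :: real
  assumes "block_ok (n, a, b)" and "2 \<le> n"
  defines "m \<equiv> real n - 1"
  shows "0 < a - 1 + 1/m" and "(1/m)\<^sup>2 < (a - 1 + 1/m) * (b - 1 + 1/m)"
proof -
  have "0 < a - 1 + 1/m \<and> (1/m)\<^sup>2 < (a - 1 + 1/m) * (b - 1 + 1/m)"
  proof (cases "n = 2")
    case True
    then show ?thesis using assms by (simp add: block_ok_def m_def)
  next
    case False
    then have m: "2 \<le> m" using assms(2) by (simp add: m_def)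
    have ok: "a > (m - 1) / m" "b > (m - 1) / m" "a > ((m - 1) * b - (m - 2)) / (m * b - (m - 1))"
      using assms False unfolding block_ok_def m_def by (auto simp: algebra_simps)
    define \<beta> where "\<beta> = b - 1 + 1/m"
    have "(m - 1) / m = 1 - 1/m" using m by (simp add: field_simps)
    then have \<alpha>: "0 < a - 1 + 1/m" and \<beta>: "0 < \<beta>" using ok by (simp_all add: \<beta>_def)
    have "(m - 1) * b - (m - 2) = (m - 1) * \<beta> + 1/m" and "m * b - (m - 1) = m * \<beta>"
      using m by (simp_all add: \<beta>_def field_simps)
    then have "((m - 1) * b - (m - 2)) / (m * b - (m - 1)) = ((m - 1) * \<beta> + 1/m) / (m * \<beta>)"
      by simp
    also have "\<dots> = 1 - 1/m + 1 / (m\<^sup>2 * \<beta>)"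
      using m \<beta> by (simp add: field_simps power2_eq_square)
    finally have "1 / (m\<^sup>2 * \<beta>) < a - 1 + 1/m" using ok(3) by simp
    then have "(1/m)\<^sup>2 < (a - 1 + 1/m) * \<beta>"
      using m \<beta> by (simp add: field_simps power2_eq_square)
    with \<alpha> show ?thesis by (simp add: \<beta>_def)
  qed
  then show "0 < a - 1 + 1/m" and "(1/m)\<^sup>2 < (a - 1 + 1/m) * (b - 1 + 1/m)" by auto
qed

lemma quadratic_form_eq_double_sum:
  assumes "A \<in> carrier_mat n n" and "v \<in> carrier_vec n"
  shows "v \<bullet> (A *\<^sub>v v) = (\<Sum>i<n. v $ i * (\<Sum>j<n. A $$ (i, j) * v $ j))"
  using assms by (simp add: scalar_prod_def atLeast0LessThan mult_mat_vec_def row_def)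

lemma Dmat_carrier: "Dmat n a b \<in> carrier_mat n n"
  unfolding Dmat_def by simp

lemma Dmat_symmetric: "transpose_mat (Dmat n a b) = Dmat n a b"
  unfolding Dmat_def by (rule eq_matI) auto

lemma Dmat_row_sum:
  fixes f :: "nat \<Rightarrow> real"
  assumes "i < n"
  shows "(\<Sum>j<n. Dmat n a b $$ (i, j) * f j) =
     (if i = 0 then a else if i = n - 1 then b else 2) * f i
     - (if 0 < i then f (i - 1) else 0) - (if Suc i < n then f (Suc i) else 0)"
proof -
  let ?d = "if i = 0 then a else if i = n - 1 then b else 2"
  have "(\<Sum>j<n. Dmat n a b $$ (i, j) * f j) = (\<Sum>j<n. (if j = i then ?d * f j else 0)
       - (if 0 < i \<and> j = i - 1 then f j else 0) - (if j = Suc i then f j else 0))"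
    by (rule sum.cong) (auto simp: Dmat_def assms)
  also have "\<dots> = ?d * f i - (if 0 < i then f (i - 1) else 0) - (if Suc i < n then f (Suc i) else 0)"
    using assms by (simp add: sum_subtractf sum.delta' cong: if_cong)
  finally show ?thesis .
qed

lemma Dmat_1_quadratic_form:
  assumes "v \<in> carrier_vec 1"
  shows "v \<bullet> (Dmat 1 a b *\<^sub>v v) = a * (v $ 0)\<^sup>2"
  using quadratic_form_eq_double_sum[OF Dmat_carrier assms]
  by (simp add: Dmat_def power2_eq_square)

lemma Dmat_quadratic_form:
  assumes "v \<in> carrier_vec (Suc (Suc k))"
  shows "v \<bullet> (Dmat (Suc (Suc k)) a b *\<^sub>v v) =
    (\<Sum>i<Suc k. (v $ i - v $ Suc i)\<^sup>2) + (a - 1) * (v $ 0)\<^sup>2 + (b - 1) * (v $ Suc k)\<^sup>2"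
proof -
  let ?n = "Suc (Suc k)" and ?f = "\<lambda>i. v $ i"
  let ?diff = "\<lambda>i. (if i < Suc k then (?f i)\<^sup>2 - ?f i * ?f (Suc i) else 0)
                 + (if 0 < i then (?f i)\<^sup>2 - ?f i * ?f (i - 1) else 0)"
  let ?ends = "\<lambda>i. (if i = 0 then (a - 1) * (?f 0)\<^sup>2 else 0)
                 + (if i = Suc k then (b - 1) * (?f (Suc k))\<^sup>2 else 0)"
  have "v \<bullet> (Dmat ?n a b *\<^sub>v v) = (\<Sum>i<?n. ?f i * (\<Sum>j<?n. Dmat ?n a b $$ (i, j) * ?f j))"
    by (rule quadratic_form_eq_double_sum[OF Dmat_carrier assms])
  also have "\<dots> = (\<Sum>i<?n. ?diff i + ?ends i)"
  proof (rule sum.cong[OF refl])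
    fix i assume "i \<in> {..<?n}"
    then have i: "i < ?n" by simp
    show "?f i * (\<Sum>j<?n. Dmat ?n a b $$ (i, j) * ?f j) = ?diff i + ?ends i"
      unfolding Dmat_row_sum[OF i] using i by (auto simp: power2_eq_square algebra_simps)
  qed
  also have "\<dots> = (\<Sum>i<Suc k. (?f i - ?f (Suc i))\<^sup>2) + (\<Sum>i<?n. ?ends i)"
    by (simp only: sum.distrib sum_squared_diffs_split)
  also have "(\<Sum>i<?n. ?ends i) = (a - 1) * (?f 0)\<^sup>2 + (b - 1) * (?f (Suc k))\<^sup>2"
    by (simp add: sum.distrib)
  finally show ?thesis by simp
qed

lemma Dmat_spd:
  assumes ok: "block_ok (n, a, b)"
  shows "spd n (Dmat n a b)"
  unfolding spd_def
proof (intro conjI ballI impI Dmat_carrier Dmat_symmetric)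
  fix v :: "real vec" assume v: "v \<in> carrier_vec n" and "v \<noteq> 0\<^sub>v n"
  have "\<exists>i<n. v $ i \<noteq> 0"
  proof (rule ccontr)
    assume "\<not> ?thesis"
    then have "v = 0\<^sub>v n" using v by (intro eq_vecI) auto
    with \<open>v \<noteq> 0\<^sub>v n\<close> show False by contradiction
  qed
  then obtain i where i: "i < n" "v $ i \<noteq> 0" by blast
  have "n = 1 \<or> 2 \<le> n" using ok unfolding block_ok_def by auto
  then consider "n = 1" | k where "n = Suc (Suc k)"
    by (auto simp: numeral_2_eq_2 dest: le_Suc_ex)
  then show "0 < v \<bullet> (Dmat n a b *\<^sub>v v)"
  proof cases
    case 1
    then show ?thesis using ok v i Dmat_1_quadratic_form[of v a b] by (simp add: block_ok_def)
  next
    case (2 k)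
    let ?S = "\<Sum>i<Suc k. (v $ i - v $ Suc i)\<^sup>2"
    have "real n - 1 = real (Suc k)" using 2 by simp
    note ends = block_ok_end_coefficients[OF ok, unfolded this]
    have "0 < ?S + (a - 1) * (v $ 0)\<^sup>2 + (b - 1) * (v $ Suc k)\<^sup>2"
    proof (cases "v $ 0 = 0 \<and> v $ Suc k = 0")
      case True
      then show ?thesis using sum_squared_diffs_pos[of "\<lambda>i. v $ i" i "Suc k"] i 2 by simp
    next
      case False
      then show ?thesis
        using energy_with_boundary_terms_pos[OF _ squared_telescope_le ends] 2 by auto
    qed
    then show ?thesis using v 2 by (simp add: Dmat_quadratic_form)
  qed
qed

lemma spd_quadratic_form_nonneg:
  assumes "spd n A" and "v \<in> carrier_vec n"
  shows "0 \<le> v \<bullet> (A *\<^sub>v v)"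
  using assms unfolding spd_def by (cases "v = 0\<^sub>v n") (auto intro: less_imp_le)

lemma spd_add:
  assumes "spd n A" and "spd n B"
  shows "spd n (A + B)"
  unfolding spd_def
proof (intro conjI ballI impI)
  have A: "A \<in> carrier_mat n n" and B: "B \<in> carrier_mat n n" using assms unfolding spd_def by auto
  then show "A + B \<in> carrier_mat n n" by simp
  show "transpose_mat (A + B) = A + B" using assms A B unfolding spd_def by (simp add: transpose_add)
  fix v :: "real vec" assume v: "v \<in> carrier_vec n" and "v \<noteq> 0\<^sub>v n"
  then have "0 < v \<bullet> (A *\<^sub>v v)" "0 < v \<bullet> (B *\<^sub>v v)" using assms unfolding spd_def by blast+
  moreover have "v \<bullet> ((A + B) *\<^sub>v v) = v \<bullet> (A *\<^sub>v v) + v \<bullet> (B *\<^sub>v v)"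
    using A B v by (simp add: add_mult_distrib_mat_vec scalar_prod_add_distrib[of _ n])
  ultimately show "0 < v \<bullet> ((A + B) *\<^sub>v v)" by simp
qed

lemma spd_four_block_diag:
  assumes "spd n1 A" and "spd n2 B"
  shows "spd (n1 + n2) (four_block_mat A (0\<^sub>m n1 n2) (0\<^sub>m n2 n1) B)" (is "spd _ ?M")
  unfolding spd_def
proof (intro conjI ballI impI)
  have A: "A \<in> carrier_mat n1 n1" "transpose_mat A = A"
    and B: "B \<in> carrier_mat n2 n2" "transpose_mat B = B"
    using assms unfolding spd_def by auto
  then show "?M \<in> carrier_mat (n1 + n2) (n1 + n2)" by simp
  show "transpose_mat ?M = ?M"
    using A B by (subst transpose_four_block_mat[of _ n1 n1 _ n2 _ n2]) auto
  fix v :: "real vec" assume v: "v \<in> carrier_vec (n1 + n2)" and nz: "v \<noteq> 0\<^sub>v (n1 + n2)"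
  define v1 where "v1 = vec_first v n1"
  define v2 where "v2 = vec_last v n2"
  have v1: "v1 \<in> carrier_vec n1" and v2: "v2 \<in> carrier_vec n2" unfolding v1_def v2_def by auto
  have split: "v = v1 @\<^sub>v v2" unfolding v1_def v2_def using v by simp
  have "v \<bullet> (?M *\<^sub>v v) = v1 \<bullet> (A *\<^sub>v v1) + v2 \<bullet> (B *\<^sub>v v2)"
    unfolding split using A B v1 v2 by (simp add: mult_mat_vec_split scalar_prod_append[of _ n1 _ n2])
  moreover have "v1 \<noteq> 0\<^sub>v n1 \<or> v2 \<noteq> 0\<^sub>v n2"
  proof (rule ccontr)
    assume "\<not> ?thesis"
    then have "v = 0\<^sub>v n1 @\<^sub>v 0\<^sub>v n2" using split by simp
    also have "\<dots> = 0\<^sub>v (n1 + n2)" by (intro eq_vecI) auto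
    finally show False using nz by contradiction
  qed
  moreover have "0 \<le> v1 \<bullet> (A *\<^sub>v v1)" "0 \<le> v2 \<bullet> (B *\<^sub>v v2)"
    using assms v1 v2 by (simp_all add: spd_quadratic_form_nonneg)
  moreover have "v1 \<noteq> 0\<^sub>v n1 \<Longrightarrow> 0 < v1 \<bullet> (A *\<^sub>v v1)" "v2 \<noteq> 0\<^sub>v n2 \<Longrightarrow> 0 < v2 \<bullet> (B *\<^sub>v v2)"
    using assms v1 v2 unfolding spd_def by blast+
  ultimately show "0 < v \<bullet> (?M *\<^sub>v v)" by linarith
qed

lemma spd_block_diag:
  assumes "\<forall>B \<in> set Bs. spd (dim_row B) B"
  shows "spd (sum_list (map dim_row Bs)) (block_diag Bs)"
  using assms
proof (induction Bs)
  case Nil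
  have "v = 0\<^sub>v 0" if "v \<in> carrier_vec 0" for v :: "real vec" using that by (intro eq_vecI) auto
  then show ?case unfolding spd_def by auto
next
  case (Cons B Bs)
  let ?N = "sum_list (map dim_row Bs)"
  have IH: "spd ?N (block_diag Bs)" and spd_B: "spd (dim_row B) B" using Cons by auto
  then have "dim_row (block_diag Bs) = ?N" "dim_col (block_diag Bs) = ?N" "dim_col B = dim_row B"
    unfolding spd_def by auto
  then show ?case using spd_four_block_diag[OF spd_B IH] by simp
qed

lemma spd_congruence:
  assumes B: "spd n B" and P: "P \<in> carrier_mat n n"
    and ker: "\<And>v. v \<in> carrier_vec n \<Longrightarrow> P *\<^sub>v v = 0\<^sub>v n \<Longrightarrow> v = 0\<^sub>v n"
  shows "spd n (transpose_mat P * B * P)"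
  unfolding spd_def
proof (intro conjI ballI impI)
  have Bc: "B \<in> carrier_mat n n" and Bt: "transpose_mat B = B" using B unfolding spd_def by auto
  then show "transpose_mat P * B * P \<in> carrier_mat n n" using P by simp
  show "transpose_mat (transpose_mat P * B * P) = transpose_mat P * B * P"
    using P Bc Bt by (simp add: transpose_mult[of _ n n _ n] assoc_mult_mat[of _ n n _ n _ n])
  fix v :: "real vec" assume v: "v \<in> carrier_vec n" and nz: "v \<noteq> 0\<^sub>v n"
  define w where "w = P *\<^sub>v v"
  have w: "w \<in> carrier_vec n" unfolding w_def using P v by simp
  have "v \<bullet> ((transpose_mat P * B * P) *\<^sub>v v) = v \<bullet> (transpose_mat P *\<^sub>v (B *\<^sub>v w))"
    unfolding w_def using P Bc v by (simp add: assoc_mult_mat_vec[of _ n n _ n])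
  also have "\<dots> = (transpose_mat P *\<^sub>v (B *\<^sub>v w)) \<bullet> v"
    using P Bc w v by (intro comm_scalar_prod[of _ n]) auto
  also have "\<dots> = w \<bullet> (B *\<^sub>v w)"
    unfolding w_def using P Bc v
    by (subst transpose_vec_mult_scalar[OF P v]) (auto intro: comm_scalar_prod[of _ n])
  finally have "v \<bullet> ((transpose_mat P * B * P) *\<^sub>v v) = w \<bullet> (B *\<^sub>v w)" .
  moreover have "w \<noteq> 0\<^sub>v n" using ker v nz unfolding w_def by blast
  ultimately show "0 < v \<bullet> ((transpose_mat P * B * P) *\<^sub>v v)"
    using B w unfolding spd_def by simp
qed

lemma perm_mat_mult_vec_eq_zero:
  assumes "perm_mat n P" and v: "v \<in> carrier_vec n" and Pv: "P *\<^sub>v v = 0\<^sub>v n"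
  shows "v = 0\<^sub>v n"
proof -
  obtain p where p: "p permutes {..<n}"
    and P: "P \<in> carrier_mat n n" "\<forall>i<n. \<forall>j<n. P $$ (i, j) = (if p i = j then 1 else 0)"
    using assms(1) unfolding perm_mat_def by blast
  have "v $ p i = 0" if i: "i < n" for i
  proof -
    have "p i < n" using p i by (meson lessThan_iff permutes_in_image)
    have "0 = (\<Sum>j<n. P $$ (i, j) * v $ j)"
      using arg_cong[OF Pv, of "\<lambda>w. w $ i"] P v i by (simp add: scalar_prod_def row_def atLeast0LessThan)
    also have "\<dots> = (\<Sum>j<n. if p i = j then v $ j else 0)"
      using P i by (intro sum.cong) auto
    also have "\<dots> = v $ p i" using \<open>p i < n\<close> by simp
    finally show ?thesis by simp
  qed
  moreover have "\<forall>j<n. \<exists>i<n. p i = j"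
    using p by (metis lessThan_iff permutes_inverses(1) permutes_in_image permutes_inv)
  ultimately show ?thesis using v by (intro eq_vecI) auto
qed

lemma spd_Dblocks:
  assumes "\<forall>p \<in> set ps. block_ok p" and "(\<Sum>(n, a, b)\<leftarrow>ps. n) = N"
  shows "spd N (Dblocks ps)"
proof -
  have dim_row_Dmat: "dim_row (Dmat n a b) = n" for n a b using Dmat_carrier by blast
  have "map dim_row (map (\<lambda>(n, a, b). Dmat n a b) ps) = map (\<lambda>(n, a, b). n) ps"
    by (auto simp: dim_row_Dmat)
  moreover have "\<forall>B \<in> set (map (\<lambda>(n, a, b). Dmat n a b) ps). spd (dim_row B) B"
    using assms(1) by (auto simp: dim_row_Dmat intro!: Dmat_spd)
  ultimately show ?thesis
    unfolding Dblocks_def using spd_block_diag assms(2) by metis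
qed

theorem theorem2:
  fixes Nc :: nat and xs ys :: "(nat \<times> real \<times> real) list" and P :: "real mat"
  assumes "Nc \<ge> 1"
    and "(\<Sum>(n,a,b)\<leftarrow>xs. n) = Nc"
    and "(\<Sum>(m,c,d)\<leftarrow>ys. m) = Nc"
    and "perm_mat Nc P"
    and "\<forall>p \<in> set xs. block_ok p"
    and "\<forall>p \<in> set ys. block_ok p"
  shows "spd Nc (Dblocks xs + transpose_mat P * Dblocks ys * P)"
proof (rule spd_add)
  show "spd Nc (Dblocks xs)" using assms(5,2) by (rule spd_Dblocks)
  have "P \<in> carrier_mat Nc Nc" using assms(4) unfolding perm_mat_def by blast
  with spd_Dblocks[OF assms(6,3)] show "spd Nc (transpose_mat P * Dblocks ys * P)"
    by (rule spd_congruence) (use assms(4) perm_mat_mult_vec_eq_zero in blast)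
qed

end
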